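(* Assume $a_T/T\to0$. Let $\hat c\in\mathcal C$ satisfy the out-of-sample guarantee with speed $(a_T)$. Then for all $x\in\mathcal X$ and $\mathbb P\in\mathcal P^o$, $$\liminf_{T\to\infty}\sqrt{\tfrac{T}{a_T}}\big(\hat c(x,\mathbb P,T)-c(x,\mathbb P)\big)\ \ge\ \limsup_{T\to\infty}\sqrt{\tfrac{T}{a_T}}\,\big|\hat c_{\mathrm V}(x,\mathbb P,T)-c(x,\mathbb P)\big|=\sqrt{2\,\mathrm{Var}_{\mathbb P}(\ell(x,\xi))},$$ where $\hat c_{\mathrm V}(x,\mathbb P,T)=c(x,\mathbb P)+\sqrt{\frac{2a_T}{T}\mathrm{Var}_{\mathbb P}(\ell(x,\xi))}$.
   Context: Setting: $\Sigma=\{1,\dots,d\}$ ($d\ge2$) is finite; $\mathcal P\subset\mathbb R^d$ is the probability simplex over $\Sigma$ and $\mathcal P^o$ its relative interior (all entries positive). $\mathcal X\subset\mathbb R^n$ is compact and $\ell:\mathcal X\times\Sigma\to\mathbb R$ is continuous in $x$ for each $i$. For $x\in\mathcal X$, $\mu\in\mathbb R^d$ let $c(x,\mu)=\sum_{i\in\Sigma}\ell(x,i)\mu(i)$, and $\mathrm{Var}_{\mathbb P}(\ell(x,\xi))=\sum_i\mathbb P(i)(\ell(x,i)-c(x,\mathbb P))^2$. Data $\xi_1,\xi_2,\dots$ are i.i.d. with law $\mathbb P\in\mathcal P$, $\mathbb P^\infty$ denotes their joint law, and $\hat{\mathbb P}_T(i)=\frac1T\sum_{t=1}^T\mathbf 1\{\xi_t=i\}$.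 $(a_T)_{T\ge1}$ is a sequence of positive reals with $a_T\to\infty$. A predictor is a sequence $\hat c=(\hat c(\cdot,\cdot,T))_{T\in\mathbb N}$ of functions $\mathcal X\times\mathcal P\to\mathbb R$. It is regular, written $\hat c\in\mathcal C$, if (i) the sequence $(\hat c(\cdot,\cdot,T))_T$ is uniformly bounded and equicontinuous on $\mathcal X\times\mathcal P$, and (ii) each $\hat c(x,\cdot,T)$ is differentiable in $\mathbb P$ and the sequence of derivative maps $(x,\mathbb P)\mapsto\nabla_{\mathbb P}\hat c(x,\mathbb P,T)$ is uniformly bounded and equicontinuous. (A sequence $(f_T)$ is equicontinuous if for every point $y$ and $\varepsilon>0$ there is a neighbourhood $U$ of $y$ with $|f_T(y)-f_T(z)|<\varepsilon$ for all $z\in U$ and all $T$.) Out-of-sample guarantee with speed $(a_T)$: for all $x\in\mathcal X$ and $\mathbb P\in\mathcal P^o$, $\limsup_{T\to\infty}\frac1{a_T}\log\mathbb P^\infty\big(c(x,\mathbb P)>\hat c(x,\hat{\mathbb P}_T,T)\big)\le-1$. *)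

theory Defs
  imports "HOL-Analysis.Analysis" "HOL-Probability.Probability"
begin

text \<open>The finite alphabet Sigma is the finite type 'd; distributions are vectors in real^'d.\<close>

definition prob_simplex :: "(real^'d) set" where
  "prob_simplex = {P. (\<forall>i. 0 \<le> P $ i) \<and> (\<Sum>i\<in>UNIV. P $ i) = 1}"

definition prob_simplex_interior :: "(real^'d) set" where
  "prob_simplex_interior = {P. (\<forall>i. 0 < P $ i) \<and> (\<Sum>i\<in>UNIV. P $ i) = 1}"

definition cost :: "('x \<Rightarrow> 'd::finite \<Rightarrow> real) \<Rightarrow> 'x \<Rightarrow> real^'d \<Rightarrow> real" where
  "cost l x \<mu> = (\<Sum>i\<in>UNIV. l x i * \<mu> $ i)"

definition variance_loss :: "('x \<Rightarrow> 'd::finite \<Rightarrow> real) \<Rightarrow> 'x \<Rightarrow> real^'d \<Rightarrow> real" where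
  "variance_loss l x P = (\<Sum>i\<in>UNIV. P $ i * (l x i - cost l x P)\<^sup>2)"

definition law :: "real^'d \<Rightarrow> 'd::finite measure" where
  "law P = point_measure UNIV (\<lambda>i. ennreal (P $ i))"

text \<open>Joint law P^infinity of the i.i.d. sequence xi_1, xi_2, ... (xi_t = w !! (t-1)).\<close>
definition law_inf :: "real^'d \<Rightarrow> 'd::finite stream measure" where
  "law_inf P = stream_space (law P)"

definition empirical :: "nat \<Rightarrow> 'd::finite stream \<Rightarrow> real^'d" where
  "empirical T w = (\<chi> i. real (card {t. t < T \<and> w !! t = i}) / real T)"

definition eln :: "real \<Rightarrow> ereal" where
  "eln p = (if p = 0 then -\<infinity> else ereal (ln p))"

definition equicont_on :: "('a::metric_space) set \<Rightarrow> (nat \<Rightarrow> 'a \<Rightarrow> 'b::metric_space) \<Rightarrow> bool" where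
  "equicont_on S f = (\<forall>y\<in>S. \<forall>e>0. \<exists>\<delta>>0. \<forall>T\<ge>1. \<forall>z\<in>S. dist z y < \<delta> \<longrightarrow> dist (f T y) (f T z) < e)"

definition unif_bounded_on :: "'a set \<Rightarrow> (nat \<Rightarrow> 'a \<Rightarrow> 'b::real_normed_vector) \<Rightarrow> bool" where
  "unif_bounded_on S f = (\<exists>B. \<forall>T\<ge>1. \<forall>y\<in>S. norm (f T y) \<le> B)"

definition regular_predictor :: "(real^'n) set \<Rightarrow> (real^'n \<Rightarrow> real^'d \<Rightarrow> nat \<Rightarrow> real) \<Rightarrow> bool" where
  "regular_predictor X chat =
     (unif_bounded_on (X \<times> prob_simplex) (\<lambda>T (x,P). chat x P T) \<and>
      equicont_on (X \<times> prob_simplex) (\<lambda>T (x,P). chat x P T) \<and>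
      (\<exists>g :: real^'n \<Rightarrow> real^'d \<Rightarrow> nat \<Rightarrow> real^'d.
         (\<forall>T\<ge>1. \<forall>x\<in>X. \<forall>P\<in>prob_simplex.
            ((\<lambda>Q. chat x Q T) has_derivative (\<lambda>h. g x P T \<bullet> h)) (at P within prob_simplex)) \<and>
         unif_bounded_on (X \<times> prob_simplex) (\<lambda>T (x,P). g x P T) \<and>
         equicont_on (X \<times> prob_simplex) (\<lambda>T (x,P). g x P T)))"

definition out_of_sample_guarantee ::
  "(real^'n) set \<Rightarrow> (real^'n \<Rightarrow> 'd::finite \<Rightarrow> real) \<Rightarrow> (real^'n \<Rightarrow> real^'d \<Rightarrow> nat \<Rightarrow> real) \<Rightarrow> (nat \<Rightarrow> real) \<Rightarrow> bool" where
  "out_of_sample_guarantee X l chat a =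
     (\<forall>x\<in>X. \<forall>P\<in>prob_simplex_interior.
        limsup (\<lambda>T. eln (measure (law_inf P)
                   {w \<in> space (law_inf P). cost l x P > chat x (empirical T w) T}) / ereal (a T))
        \<le> -1)"

definition chat_V :: "(real^'n \<Rightarrow> 'd::finite \<Rightarrow> real) \<Rightarrow> (nat \<Rightarrow> real) \<Rightarrow> real^'n \<Rightarrow> real^'d \<Rightarrow> nat \<Rightarrow> real" where
  "chat_V l a x P T = cost l x P + sqrt (2 * a T / real T * variance_loss l x P)"

end

theory Submission
  imports Defs
begin

(*
  Suppose, for a contradiction, that chat(x,P,T) <= c(x,P) + s sqrt(a_T/T) for infinitely many T, where
  s < sqrt(2 Var_P).  Choose tau >= 0 with s < tau Var_P and tau^2 Var_P < 2, and tilt P along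
  the direction h_j = -P_j (l(x,j) - c(x,P)) by t_T = tau sqrt(a_T/T).  The tilted law Q_T has
  cost c(x,P) - t_T Var_P, while KL(Q_T || P) = t_T^2 Var_P / 2 + O(t_T^3); a change of measure
  and Chebyshev's inequality show that the empirical distribution lands near Q_T with probability
  at least exp(-a_T K) / 2 for some K < 1.  Consistency of chat at the points P - eps h forces
  the gradient of chat at P in direction h to be asymptotically at most -Var_P, so by the
  equicontinuity of the gradients chat is below c(x,P) near Q_T.  Hence the out-of-sample
  disappointment has probability at least exp(-a_T K) / 2 infinitely often, contradicting the
  guarantee.  The upper side is the explicit formula for chat_V.
*)

section \<open>Expectations over i.i.d. words\<close>

fun iid_expect :: "real^'d \<Rightarrow> nat \<Rightarrow> ('d::finite list \<Rightarrow> real) \<Rightarrow> real" where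
  "iid_expect P 0 f = f []"
| "iid_expect P (Suc T) f = (\<Sum>i\<in>UNIV. P$i * iid_expect P T (\<lambda>v. f (i # v)))"

lemma iid_expect_nonneg:
  assumes "\<And>i. P$i \<ge> 0" "\<And>u. f u \<ge> 0" shows "iid_expect P T f \<ge> 0"
  using assms(2) by (induction T arbitrary: f) (auto intro!: sum_nonneg mult_nonneg_nonneg assms(1))

lemma iid_expect_mono:
  assumes "\<And>i. P$i \<ge> 0" "\<And>u. length u = T \<Longrightarrow> f u \<le> g u"
  shows "iid_expect P T f \<le> iid_expect P T g"
  using assms(2) by (induction T arbitrary: f g) (auto intro!: sum_mono mult_left_mono assms(1))

lemma iid_expect_add: "iid_expect P T (\<lambda>u. f u + g u) = iid_expect P T f + iid_expect P T g"
  by (induction T arbitrary: f g) (auto simp: distrib_left sum.distrib)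

lemma iid_expect_cmult: "iid_expect P T (\<lambda>u. c * f u) = c * iid_expect P T f"
  by (induction T arbitrary: f) (auto simp: sum_distrib_left mult_ac)

lemma iid_expect_sum:
  "finite I \<Longrightarrow> iid_expect P T (\<lambda>u. \<Sum>k\<in>I. f k u) = (\<Sum>k\<in>I. iid_expect P T (f k))"
proof (induction I rule: finite_induct)
  case empty
  show ?case using iid_expect_cmult[of P T 0 "\<lambda>_. 0"] by simp
qed (simp add: iid_expect_add)

lemma iid_expect_const: "(\<Sum>i\<in>UNIV. P$i) = 1 \<Longrightarrow> iid_expect P T (\<lambda>u. c) = c"
  by (induction T) (auto simp: sum_distrib_right[symmetric])

lemma sets_law: "sets (law P) = sets (count_space UNIV)"
  by (simp add: law_def sets_point_measure)

lemma space_law [simp]: "space (law P) = UNIV"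
  by (simp add: law_def space_point_measure)

lemma prob_space_law:
  assumes "P \<in> prob_simplex" shows "prob_space (law P)"
proof
  have "emeasure (law P) UNIV = (\<Sum>i\<in>UNIV. ennreal (P$i))"
    unfolding law_def by (rule emeasure_point_measure_finite) auto
  also have "\<dots> = ennreal (\<Sum>i\<in>UNIV. P$i)"
    using assms by (subst sum_ennreal) (auto simp: prob_simplex_def)
  also have "\<dots> = 1" using assms by (simp add: prob_simplex_def)
  finally show "emeasure (law P) (space (law P)) = 1" by simp
qed

lemma measurable_stake_law:
  "(\<lambda>w. g (stake T w)) \<in> measurable (stream_space (law P)) (count_space UNIV)"
proof -
  have "(\<lambda>w. g (stake T w)) \<in> measurable (stream_space (count_space UNIV)) (count_space UNIV)"
    by measurable
  then show ?thesis
    by (subst measurable_cong_sets[OF sets_stream_space_cong[OF sets_law] refl])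
qed

lemma nn_integral_stake_eq_iid_expect:
  assumes P: "P \<in> prob_simplex" and f: "\<And>u. f u \<ge> 0"
  shows "(\<integral>\<^sup>+w. ennreal (f (stake T w)) \<partial>law_inf P) = ennreal (iid_expect P T f)"
  using f
proof (induction T arbitrary: f)
  case 0
  interpret prob_space "law_inf P" unfolding law_inf_def
    using prob_space.prob_space_stream_space[OF prob_space_law[OF P]] .
  show ?case by (simp add: emeasure_space_1)
next
  case (Suc T)
  interpret L: prob_space "law P" by (rule prob_space_law[OF P])
  have P0: "\<And>i. P$i \<ge> 0" using P by (simp add: prob_simplex_def)
  have nonneg: "\<And>i. iid_expect P T (\<lambda>v. f (i # v)) \<ge> 0"
    using P0 Suc.prems by (rule iid_expect_nonneg)
  have "(\<integral>\<^sup>+w. ennreal (f (stake (Suc T) w)) \<partial>law_inf P)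
     = (\<integral>\<^sup>+i. (\<integral>\<^sup>+w. ennreal (f (stake (Suc T) (i ## w))) \<partial>law_inf P) \<partial>law P)"
    unfolding law_inf_def
    by (rule L.nn_integral_stream_space, rule measurable_compose[OF measurable_stake_law]) simp
  also have "\<dots> = (\<integral>\<^sup>+i. ennreal (iid_expect P T (\<lambda>v. f (i # v))) \<partial>law P)"
    using Suc.IH[of "\<lambda>v. f (_ # v)"] Suc.prems by simp
  also have "\<dots> = (\<Sum>i\<in>UNIV. ennreal (P$i) * ennreal (iid_expect P T (\<lambda>v. f (i # v))))"
    unfolding law_def by (rule nn_integral_point_measure_finite) simp
  also have "\<dots> = ennreal (iid_expect P (Suc T) f)"
    using P0 nonneg by (simp add: ennreal_mult[symmetric] sum_ennreal)
  finally show ?case .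
qed

definition empirical_word :: "nat \<Rightarrow> 'd::finite list \<Rightarrow> real^'d" where
  "empirical_word T u = (\<chi> i. real (count_list u i) / real T)"

lemma empirical_word_nth [simp]: "empirical_word T u $ j = real (count_list u j) / real T"
  by (simp add: empirical_word_def)

lemma empirical_eq_empirical_word: "empirical T w = empirical_word T (stake T w)"
proof -
  have "card {t. t < T \<and> w !! t = i} = count_list (stake T w) i" for i
    unfolding count_list_eq_length_filter length_filter_conv_card
    by (rule arg_cong[where f=card]) auto
  then show ?thesis by (simp add: empirical_def empirical_word_def)
qed

lemma empirical_word_in_simplex:
  assumes "length u = T" "T \<ge> 1" shows "empirical_word T u \<in> prob_simplex"
proof -
  have "(\<Sum>i\<in>UNIV. real (count_list u i)) = real T"
    using sum_count_set[of u UNIV] assms(1) by (simp flip: of_nat_sum)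
  then show ?thesis
    using assms(2) by (simp add: prob_simplex_def empirical_word_def sum_divide_distrib[symmetric])
qed

lemma measure_empirical_eq_iid_expect:
  assumes P: "P \<in> prob_simplex"
  shows "measure (law_inf P) {w \<in> space (law_inf P). \<Phi> (empirical T w)}
         = iid_expect P T (\<lambda>u. of_bool (\<Phi> (empirical_word T u)))"
proof -
  let ?S = "{w \<in> space (law_inf P). \<Phi> (empirical T w)}"
  have "Measurable.pred (law_inf P) (\<lambda>w. \<Phi> (empirical_word T (stake T w)))"
    unfolding law_inf_def Measurable.pred_def
    using measurable_stake_law[of "\<lambda>u. \<Phi> (empirical_word T u)" T P] by simp
  then have S: "?S \<in> sets (law_inf P)"
    by (simp add: Measurable.pred_def empirical_eq_empirical_word)
  have "emeasure (law_inf P) ?S = (\<integral>\<^sup>+w. indicator ?S w \<partial>law_inf P)"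
    using S by simp
  also have "\<dots> = (\<integral>\<^sup>+w. ennreal (of_bool (\<Phi> (empirical_word T (stake T w)))) \<partial>law_inf P)"
    by (intro nn_integral_cong) (auto simp: indicator_def empirical_eq_empirical_word)
  also have "\<dots> = ennreal (iid_expect P T (\<lambda>u. of_bool (\<Phi> (empirical_word T u))))"
    by (rule nn_integral_stake_eq_iid_expect[OF P]) simp
  finally show ?thesis
    using P by (simp add: measure_def iid_expect_nonneg prob_simplex_def)
qed

lemma iid_expect_near_le_measure_empirical:
  assumes P: "P \<in> prob_simplex" and T: "T \<ge> 1"
    and near: "\<And>q. q \<in> prob_simplex \<Longrightarrow> \<forall>j. \<bar>q$j - Q$j\<bar> < \<rho> \<Longrightarrow> \<Phi> q"
  shows "iid_expect P T (\<lambda>u. of_bool (\<forall>j. \<bar>empirical_word T u $ j - Q$j\<bar> < \<rho>))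
         \<le> measure (law_inf P) {w \<in> space (law_inf P). \<Phi> (empirical T w)}"
  unfolding measure_empirical_eq_iid_expect[OF P]
proof (rule iid_expect_mono)
  show "P$i \<ge> 0" for i using P by (simp add: prob_simplex_def)
  fix u :: "'a list" assume "length u = T"
  then show "of_bool (\<forall>j. \<bar>empirical_word T u $ j - Q$j\<bar> < \<rho>) \<le> (of_bool (\<Phi> (empirical_word T u)) :: real)"
    using near[OF empirical_word_in_simplex[OF _ T]] by (auto simp del: empirical_word_nth)
qed

section \<open>Lower bounds for the empirical distribution\<close>

lemma iid_expect_count_sq:
  assumes "(\<Sum>j\<in>UNIV. Q$j) = 1"
  shows "iid_expect Q T (\<lambda>u. (real (count_list u i) + c)\<^sup>2) = (c + T * Q$i)\<^sup>2 + T * Q$i * (1 - Q$i)"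
proof (induction T arbitrary: c)
  case (Suc T)
  define R where "R = real T * Q$i * (1 - Q$i)"
  have shift: "(\<lambda>v. (real (count_list (j # v) i) + c)\<^sup>2)
             = (\<lambda>v. (real (count_list v i) + (c + (if j = i then 1 else 0)))\<^sup>2)" for j
    by (auto simp: fun_eq_iff add_ac)
  have step: "Q$j * ((c + (if j = i then 1 else 0) + T * Q$i)\<^sup>2 + R)
      = Q$j * ((c + T * Q$i)\<^sup>2 + R) + (if j = i then Q$i * (2 * (c + T * Q$i) + 1) else 0)" for j
    by (cases "j = i") (simp_all add: power2_eq_square algebra_simps)
  have "iid_expect Q (Suc T) (\<lambda>u. (real (count_list u i) + c)\<^sup>2)
      = (\<Sum>j\<in>UNIV. Q$j * ((c + (if j = i then 1 else 0) + T * Q$i)\<^sup>2 + R))"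
    by (simp only: iid_expect.simps shift Suc.IH R_def)
  also have "\<dots> = (c + T * Q$i)\<^sup>2 + R + Q$i * (2 * (c + T * Q$i) + 1)"
    by (simp only: step sum.distrib sum_distrib_right[symmetric] assms) simp
  also have "\<dots> = (c + real (Suc T) * Q$i)\<^sup>2 + real (Suc T) * Q$i * (1 - Q$i)"
    by (simp add: R_def power2_eq_square algebra_simps)
  finally show ?case .
qed simp

lemma iid_expect_near_ge_Chebyshev:
  fixes Q :: "real^'d::finite"
  assumes Q: "Q \<in> prob_simplex" and \<rho>: "\<rho> > 0" and T: "T \<ge> 1"
  shows "iid_expect Q T (\<lambda>u. of_bool (\<forall>j. \<bar>empirical_word T u $ j - Q$j\<bar> < \<rho>))
         \<ge> 1 - real CARD('d) / (real T * \<rho>\<^sup>2)"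
proof -
  define dev where "dev u = (\<Sum>j\<in>UNIV. (real (count_list u j) + - (real T * Q$j))\<^sup>2)" for u
  define c where "c = 1 / (real T * \<rho>)\<^sup>2"
  have Q0: "\<And>j. Q$j \<ge> 0" and sQ: "(\<Sum>j\<in>UNIV. Q$j) = 1" using Q by (auto simp: prob_simplex_def)
  have Tpos: "real T > 0" using T by simp
  have "1 + - c * dev u \<le> of_bool (\<forall>j. \<bar>empirical_word T u $ j - Q$j\<bar> < \<rho>)" for u
  proof (cases "\<forall>j. \<bar>empirical_word T u $ j - Q$j\<bar> < \<rho>")
    case False
    then obtain j where j: "\<rho> \<le> \<bar>real (count_list u j) / real T - Q$j\<bar>" by (auto simp: not_less)
    have "real T * \<rho> \<le> \<bar>real (count_list u j) + - (real T * Q$j)\<bar>"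
      using mult_left_mono[OF j, of "real T"] Tpos by (simp add: abs_mult[symmetric] field_simps)
    then have "(real T * \<rho>)\<^sup>2 \<le> (real (count_list u j) + - (real T * Q$j))\<^sup>2"
      using \<rho> Tpos by (metis abs_le_square_iff abs_of_pos mult_pos_pos)
    also have "\<dots> \<le> dev u" unfolding dev_def by (rule member_le_sum) auto
    finally have "1 \<le> c * dev u" using \<rho> Tpos by (simp add: c_def)
    then show ?thesis using False by simp
  qed (simp add: c_def dev_def sum_nonneg)
  then have "iid_expect Q T (\<lambda>u. 1 + - c * dev u)
           \<le> iid_expect Q T (\<lambda>u. of_bool (\<forall>j. \<bar>empirical_word T u $ j - Q$j\<bar> < \<rho>))"
    by (intro iid_expect_mono Q0)
  moreover have "iid_expect Q T (\<lambda>u. 1 + - c * dev u) = 1 - c * (\<Sum>j\<in>UNIV. real T * Q$j * (1 - Q$j))"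
    unfolding dev_def
    by (simp only: iid_expect_add iid_expect_cmult iid_expect_const[OF sQ]
        iid_expect_sum[OF finite_class.finite_UNIV] iid_expect_count_sq[OF sQ]) simp
  moreover have "c * (\<Sum>j\<in>UNIV. real T * Q$j * (1 - Q$j)) \<le> real CARD('d) / (real T * \<rho>\<^sup>2)"
  proof -
    have "(\<Sum>j\<in>UNIV. real T * Q$j * (1 - Q$j)) \<le> (\<Sum>j\<in>(UNIV::'d set). real T)"
    proof (rule sum_mono)
      fix j
      have "Q$j * (1 - Q$j) \<le> 1" using sum_squares_ge_zero[of "Q$j - 1/2" 0]
        by (simp add: power2_eq_square algebra_simps)
      then show "real T * Q$j * (1 - Q$j) \<le> real T"
        using mult_left_mono[of _ 1 "real T"] Tpos by (simp add: mult.assoc)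
    qed
    then have "c * (\<Sum>j\<in>UNIV. real T * Q$j * (1 - Q$j)) \<le> c * (real CARD('d) * real T)"
      by (intro mult_left_mono) (simp_all add: c_def)
    also have "\<dots> = real CARD('d) / (real T * \<rho>\<^sup>2)"
      using Tpos \<rho> by (simp add: c_def power2_eq_square field_simps)
    finally show ?thesis .
  qed
  ultimately show ?thesis by linarith
qed

definition likelihood_ratio :: "real^'d \<Rightarrow> real^'d \<Rightarrow> 'd::finite list \<Rightarrow> real" where
  "likelihood_ratio P Q u = (\<Prod>j\<in>UNIV. (P$j / Q$j) ^ count_list u j)"

lemma likelihood_ratio_Cons: "likelihood_ratio P Q (i # v) = P$i / Q$i * likelihood_ratio P Q v"
proof -
  have "likelihood_ratio P Q (i # v)
      = (\<Prod>j\<in>UNIV. (P$j / Q$j) ^ count_list v j * (if j = i then P$i / Q$i else 1))"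
    unfolding likelihood_ratio_def by (intro prod.cong) auto
  then show ?thesis by (simp add: prod.distrib likelihood_ratio_def)
qed

lemma iid_expect_change_measure:
  assumes "\<And>j. Q$j > 0"
  shows "iid_expect P T f = iid_expect Q T (\<lambda>u. f u * likelihood_ratio P Q u)"
proof (induction T arbitrary: f)
  case 0 then show ?case by (simp add: likelihood_ratio_def)
next
  case (Suc T)
  have "Q$i * iid_expect Q T (\<lambda>v. f (i # v) * likelihood_ratio P Q (i # v))
      = P$i * iid_expect P T (\<lambda>v. f (i # v))" for i
  proof -
    have "(\<lambda>v. f (i # v) * likelihood_ratio P Q (i # v))
        = (\<lambda>v. P$i / Q$i * (f (i # v) * likelihood_ratio P Q v))"
      by (auto simp: likelihood_ratio_Cons fun_eq_iff)
    then have "Q$i * iid_expect Q T (\<lambda>v. f (i # v) * likelihood_ratio P Q (i # v))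
        = Q$i * (P$i / Q$i) * iid_expect Q T (\<lambda>v. f (i # v) * likelihood_ratio P Q v)"
      by (simp only: iid_expect_cmult mult.assoc)
    also have "\<dots> = P$i * iid_expect P T (\<lambda>v. f (i # v))"
      using assms[of i] by (simp add: Suc.IH[symmetric])
    finally show ?thesis .
  qed
  then show ?case by simp
qed

lemma likelihood_ratio_eq_exp:
  assumes "\<And>j. Q$j > 0" "\<And>j. P$j > 0"
  shows "likelihood_ratio P Q u = exp (- (\<Sum>j\<in>UNIV. real (count_list u j) * ln (Q$j / P$j)))"
proof -
  have "(P$j / Q$j) ^ count_list u j = exp (- (real (count_list u j) * ln (Q$j / P$j)))" for j
  proof -
    have "(P$j / Q$j) ^ count_list u j = exp (real (count_list u j) * ln (P$j / Q$j))"
      using assms[of j] by (simp add: exp_of_nat_mult)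
    also have "ln (P$j / Q$j) = - ln (Q$j / P$j)"
      using assms[of j] by (simp add: ln_div)
    finally show ?thesis by simp
  qed
  then show ?thesis
    by (simp add: likelihood_ratio_def exp_sum[symmetric] sum_negf)
qed

definition relative_entropy :: "real^'d::finite \<Rightarrow> real^'d \<Rightarrow> real" where
  "relative_entropy Q P = (\<Sum>j\<in>UNIV. Q$j * ln (Q$j / P$j))"

text \<open>Change of measure: on the event that the empirical distribution is \<open>\<rho>\<close>-close to \<open>Q\<close>,
  the likelihood ratio of \<open>P\<^sup>T\<close> with respect to \<open>Q\<^sup>T\<close> is at least
  \<open>exp (- T KL(Q || P) - T \<rho> \<Sum>\<bar>ln (Q/P)\<bar>)\<close>.\<close>

lemma iid_expect_near_ge_tilted:
  fixes P Q :: "real^'d::finite" and \<rho> :: real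
  assumes P: "\<And>j. P$j > 0" and Q: "\<And>j. Q$j > 0" and T: "T \<ge> 1"
  defines "near u \<equiv> of_bool (\<forall>j. \<bar>empirical_word T u $ j - Q$j\<bar> < \<rho>)"
  shows "iid_expect P T near
         \<ge> exp (- real T * relative_entropy Q P - real T * \<rho> * (\<Sum>j\<in>UNIV. \<bar>ln (Q$j / P$j)\<bar>))
           * iid_expect Q T near"
proof -
  define L where "L j = ln (Q$j / P$j)" for j
  define E where "E = exp (- real T * (\<Sum>j\<in>UNIV. Q$j * L j) - real T * \<rho> * (\<Sum>j\<in>UNIV. \<bar>L j\<bar>))"
  have Tpos: "real T > 0" using T by simp
  have "E * near u \<le> near u * likelihood_ratio P Q u" for u
  proof (cases "\<forall>j. \<bar>real (count_list u j) / real T - Q$j\<bar> < \<rho>")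
    case True
    have "(real (count_list u j) - real T * Q$j) * L j \<le> real T * \<rho> * \<bar>L j\<bar>" for j
    proof -
      have "\<bar>real (count_list u j) - real T * Q$j\<bar> \<le> real T * \<rho>"
        using mult_left_mono[OF less_imp_le[OF True[rule_format, of j]], of "real T"] Tpos
        by (simp add: abs_mult[symmetric] field_simps)
      then have "\<bar>(real (count_list u j) - real T * Q$j) * L j\<bar> \<le> real T * \<rho> * \<bar>L j\<bar>"
        by (simp add: abs_mult mult_right_mono)
      then show ?thesis by linarith
    qed
    then have "(\<Sum>j\<in>UNIV. (real (count_list u j) - real T * Q$j) * L j) \<le> (\<Sum>j\<in>UNIV. real T * \<rho> * \<bar>L j\<bar>)"
      by (rule sum_mono)
    moreover have "(\<Sum>j\<in>UNIV. (real (count_list u j) - real T * Q$j) * L j)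
        = (\<Sum>j\<in>UNIV. real (count_list u j) * L j) - real T * (\<Sum>j\<in>UNIV. Q$j * L j)"
      unfolding left_diff_distrib sum_subtractf by (simp add: sum_distrib_left mult_ac)
    ultimately have "E \<le> exp (- (\<Sum>j\<in>UNIV. real (count_list u j) * L j))"
      by (simp add: E_def sum_distrib_left[symmetric])
    then have "E \<le> likelihood_ratio P Q u"
      unfolding likelihood_ratio_eq_exp[OF Q P] L_def .
    then show ?thesis using True by (simp add: near_def)
  next
    case False
    then have "near u = 0" by (simp add: near_def)
    then show ?thesis by simp
  qed
  then have "iid_expect Q T (\<lambda>u. E * near u) \<le> iid_expect P T near"
    unfolding iid_expect_change_measure[OF Q, of P] using Q
    by (intro iid_expect_mono) (auto intro: less_imp_le)
  then show ?thesis by (simp add: iid_expect_cmult E_def L_def relative_entropy_def)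
qed

lemma one_plus_mult_ln_one_plus_le:
  fixes d :: real assumes d: "\<bar>d\<bar> \<le> 1/2"
  shows "(1 + d) * ln (1 + d) \<le> d + d\<^sup>2 / 2 + 2 * \<bar>d\<bar>^3"
proof -
  define \<phi> where "\<phi> y = (1 + y) * ln (1 + y) - y - y\<^sup>2 / 2" for y :: real
  define S where "S = {-\<bar>d\<bar>..\<bar>d\<bar>}"
  have "(\<phi> has_field_derivative ln (1 + y) - y) (at y within S)" if "y \<in> S" for y
  proof -
    have "1 + y > 0" using that d by (auto simp: S_def)
    have "(\<phi> has_field_derivative 1 * ln (1 + y) + (1 + y) * (1 / (1 + y)) - 1 - 2 * y / 2) (at y within S)"
      unfolding \<phi>_def using \<open>1 + y > 0\<close> by (auto intro!: derivative_eq_intros)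
    then show ?thesis using \<open>1 + y > 0\<close> by simp
  qed
  moreover have "norm (ln (1 + y) - y) \<le> 2 * d\<^sup>2" if "y \<in> S" for y
  proof -
    have y: "\<bar>y\<bar> \<le> \<bar>d\<bar>" using that by (auto simp: S_def)
    then have "\<bar>ln (1 + y) - y\<bar> \<le> 2 * y\<^sup>2"
      using d by (intro abs_ln_one_plus_x_minus_x_bound) linarith
    moreover have "y\<^sup>2 \<le> d\<^sup>2" using y by (simp add: abs_le_square_iff)
    ultimately show ?thesis by simp
  qed
  ultimately have "norm (\<phi> d - \<phi> 0) \<le> 2 * d\<^sup>2 * norm (d - 0)"
    by (intro field_differentiable_bound[of S]) (auto simp: S_def)
  moreover have "d\<^sup>2 * \<bar>d\<bar> = \<bar>d\<bar>^3" by (simp add: power2_eq_square power3_eq_cube)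
  ultimately show ?thesis by (simp add: \<phi>_def)
qed

lemma abs_ln_one_plus_le:
  fixes d :: real assumes "\<bar>d\<bar> \<le> 1/2"
  shows "\<bar>ln (1 + d)\<bar> \<le> 2 * \<bar>d\<bar>"
proof -
  have "\<bar>ln (1 + d) - d\<bar> \<le> 2 * d\<^sup>2" by (rule abs_ln_one_plus_x_minus_x_bound[OF assms])
  moreover have "2 * d\<^sup>2 \<le> \<bar>d\<bar>"
    using mult_right_mono[OF assms, of "\<bar>d\<bar>"] by (simp add: power2_eq_square)
  ultimately show ?thesis by linarith
qed

lemma relative_entropy_perturb_le:
  fixes P :: "real^'d::finite"
  assumes P: "\<And>j. P$j > 0" and \<delta>: "\<And>j. \<bar>\<delta> j\<bar> \<le> 1/2" and mean: "(\<Sum>j\<in>UNIV. P$j * \<delta> j) = 0"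
  shows "relative_entropy (\<chi> j. P$j * (1 + \<delta> j)) P
         \<le> (\<Sum>j\<in>UNIV. P$j * (\<delta> j)\<^sup>2) / 2 + 2 * (\<Sum>j\<in>UNIV. P$j * \<bar>\<delta> j\<bar>^3)"
proof -
  have "relative_entropy (\<chi> j. P$j * (1 + \<delta> j)) P = (\<Sum>j\<in>UNIV. P$j * ((1 + \<delta> j) * ln (1 + \<delta> j)))"
    unfolding relative_entropy_def using P by (intro sum.cong) (auto simp: less_imp_neq[symmetric])
  also have "\<dots> \<le> (\<Sum>j\<in>UNIV. P$j * (\<delta> j + (\<delta> j)\<^sup>2 / 2 + 2 * \<bar>\<delta> j\<bar>^3))"
    using P by (intro sum_mono mult_left_mono one_plus_mult_ln_one_plus_le \<delta>) (auto intro: less_imp_le)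
  also have "\<dots> = (\<Sum>j\<in>UNIV. P$j * \<delta> j) + (\<Sum>j\<in>UNIV. P$j * (\<delta> j)\<^sup>2) / 2
                  + 2 * (\<Sum>j\<in>UNIV. P$j * \<bar>\<delta> j\<bar>^3)"
    by (simp add: distrib_left sum.distrib sum_distrib_left sum_divide_distrib mult_ac)
  finally show ?thesis using mean by simp
qed

lemma iid_expect_near_perturb_ge:
  fixes P :: "real^'d::finite" and \<delta> :: "'d \<Rightarrow> real"
  assumes P: "P \<in> prob_simplex_interior" and \<delta>: "\<And>j. \<bar>\<delta> j\<bar> \<le> 1/2"
    and mean: "(\<Sum>j\<in>UNIV. P$j * \<delta> j) = 0"
    and T: "T \<ge> 1" and \<rho>: "\<rho> > 0" and T\<rho>: "2 * real CARD('d) \<le> real T * \<rho>\<^sup>2"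
  shows "iid_expect P T (\<lambda>u. of_bool (\<forall>j. \<bar>empirical_word T u $ j - P$j * (1 + \<delta> j)\<bar> < \<rho>))
         \<ge> exp (- real T * ((\<Sum>j\<in>UNIV. P$j * (\<delta> j)\<^sup>2) / 2 + 2 * (\<Sum>j\<in>UNIV. P$j * \<bar>\<delta> j\<bar>^3)
                             + 2 * \<rho> * (\<Sum>j\<in>UNIV. \<bar>\<delta> j\<bar>))) / 2"
proof -
  define Q where "Q = (\<chi> j. P$j * (1 + \<delta> j))"
  have P0: "\<And>j. P$j > 0" and sP: "(\<Sum>j\<in>UNIV. P$j) = 1"
    using P by (auto simp: prob_simplex_interior_def)
  have Q0: "Q$j > 0" for j
    using P0[of j] \<delta>[of j] by (simp add: Q_def abs_le_iff)
  have "(\<Sum>j\<in>UNIV. Q$j) = 1"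
    using sP mean by (simp add: Q_def distrib_left sum.distrib)
  then have Qs: "Q \<in> prob_simplex" using Q0 by (auto simp: prob_simplex_def less_imp_le)
  have "(\<Sum>j\<in>UNIV. \<bar>ln (Q$j / P$j)\<bar>) \<le> (\<Sum>j\<in>UNIV. 2 * \<bar>\<delta> j\<bar>)"
    using P0 by (intro sum_mono) (simp add: Q_def less_imp_neq[symmetric] abs_ln_one_plus_le[OF \<delta>])
  then have "real T * relative_entropy Q P + real T * \<rho> * (\<Sum>j\<in>UNIV. \<bar>ln (Q$j / P$j)\<bar>)
      \<le> real T * ((\<Sum>j\<in>UNIV. P$j * (\<delta> j)\<^sup>2) / 2 + 2 * (\<Sum>j\<in>UNIV. P$j * \<bar>\<delta> j\<bar>^3))
        + real T * \<rho> * (2 * (\<Sum>j\<in>UNIV. \<bar>\<delta> j\<bar>))"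
    using relative_entropy_perturb_le[OF P0 \<delta> mean] \<rho>
    by (intro add_mono mult_left_mono) (simp_all add: Q_def sum_distrib_left)
  moreover have "1 / 2 \<le> iid_expect Q T (\<lambda>u. of_bool (\<forall>j. \<bar>empirical_word T u $ j - Q$j\<bar> < \<rho>))"
  proof -
    have "real CARD('d) / (real T * \<rho>\<^sup>2) \<le> 1 / 2"
      using T\<rho> T \<rho> by (simp add: field_simps)
    then show ?thesis using iid_expect_near_ge_Chebyshev[OF Qs \<rho> T] by linarith
  qed
  ultimately have "exp (- real T * ((\<Sum>j\<in>UNIV. P$j * (\<delta> j)\<^sup>2) / 2 + 2 * (\<Sum>j\<in>UNIV. P$j * \<bar>\<delta> j\<bar>^3)
                             + 2 * \<rho> * (\<Sum>j\<in>UNIV. \<bar>\<delta> j\<bar>))) * (1 / 2)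
      \<le> exp (- real T * relative_entropy Q P - real T * \<rho> * (\<Sum>j\<in>UNIV. \<bar>ln (Q$j / P$j)\<bar>))
        * iid_expect Q T (\<lambda>u. of_bool (\<forall>j. \<bar>empirical_word T u $ j - Q$j\<bar> < \<rho>))"
    by (intro mult_mono) (simp_all add: algebra_simps)
  then show ?thesis
    using iid_expect_near_ge_tilted[OF P0 Q0 T, of \<rho>] by (simp add: Q_def)
qed

section \<open>The variance direction\<close>

lemma norm_le_card_mult:
  fixes v :: "real^'d::finite"
  assumes "\<And>j. \<bar>v$j\<bar> < \<rho>"
  shows "norm v \<le> real CARD('d) * \<rho>"
proof -
  have "norm v \<le> (\<Sum>j\<in>UNIV. \<bar>v$j\<bar>)" by (rule norm_le_l1_cart)
  also have "\<dots> \<le> (\<Sum>j\<in>(UNIV::'d set). \<rho>)" by (intro sum_mono) (auto intro: less_imp_le assms)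
  finally show ?thesis by simp
qed

lemma convex_prob_simplex: "convex prob_simplex"
  unfolding convex_def prob_simplex_def
  by (auto simp: sum.distrib sum_distrib_left[symmetric])

lemma prob_simplex_interior_subset: "prob_simplex_interior \<subseteq> prob_simplex"
  by (auto simp: prob_simplex_def prob_simplex_interior_def less_imp_le)

text \<open>Moving \<open>P\<close> along this direction lowers the cost at rate \<open>Var\<^sub>P\<close>, which is the
  least favourable perturbation: a shift of cost \<open>t Var\<^sub>P\<close> costs only \<open>t\<^sup>2 Var\<^sub>P / 2\<close>
  in relative entropy.\<close>

definition variance_direction :: "('x \<Rightarrow> 'd::finite \<Rightarrow> real) \<Rightarrow> 'x \<Rightarrow> real^'d \<Rightarrow> real^'d" where
  "variance_direction l x P = (\<chi> j. - (P$j * (l x j - cost l x P)))"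

definition variance_tilt :: "('x \<Rightarrow> 'd::finite \<Rightarrow> real) \<Rightarrow> 'x \<Rightarrow> real^'d \<Rightarrow> real \<Rightarrow> real^'d" where
  "variance_tilt l x P t = P + t *\<^sub>R variance_direction l x P"

lemma sum_mult_centered_loss:
  assumes "(\<Sum>j\<in>UNIV. P$j) = 1"
  shows "(\<Sum>j\<in>UNIV. P$j * (l x j - cost l x P)) = 0"
proof -
  have "(\<Sum>j\<in>UNIV. P$j * (l x j - cost l x P))
      = (\<Sum>j\<in>UNIV. l x j * P$j) - cost l x P * (\<Sum>j\<in>UNIV. P$j)"
    by (simp add: right_diff_distrib sum_subtractf sum_distrib_left mult_ac)
  then show ?thesis using assms by (simp add: cost_def)
qed

lemma variance_loss_nonneg: "(\<And>j. P$j \<ge> 0) \<Longrightarrow> variance_loss l x P \<ge> 0"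
  unfolding variance_loss_def by (auto intro!: sum_nonneg)

lemma cost_variance_tilt:
  assumes "(\<Sum>j\<in>UNIV. P$j) = 1"
  shows "cost l x (variance_tilt l x P t) = cost l x P - t * variance_loss l x P"
proof -
  have "(\<Sum>j\<in>UNIV. l x j * (P$j * (l x j - cost l x P)))
      = (\<Sum>j\<in>UNIV. P$j * (l x j - cost l x P)\<^sup>2) + cost l x P * (\<Sum>j\<in>UNIV. P$j * (l x j - cost l x P))"
    by (simp add: sum_distrib_left sum.distrib[symmetric] power2_eq_square algebra_simps)
  then have "(\<Sum>j\<in>UNIV. l x j * (P$j * (l x j - cost l x P))) = variance_loss l x P"
    using sum_mult_centered_loss[OF assms, of l x] by (simp add: variance_loss_def)
  moreover have "cost l x (variance_tilt l x P t)
      = cost l x P - t * (\<Sum>j\<in>UNIV. l x j * (P$j * (l x j - cost l x P)))"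
    unfolding cost_def variance_tilt_def variance_direction_def
    by (simp add: algebra_simps sum.distrib sum_distrib_left sum_subtractf sum_negf)
  ultimately show ?thesis by simp
qed

lemma variance_tilt_nth:
  "variance_tilt l x P t $ j = P$j * (1 + - t * (l x j - cost l x P))"
  by (simp add: variance_tilt_def variance_direction_def algebra_simps)

lemma variance_tilt_in_interior:
  assumes P: "P \<in> prob_simplex_interior" and t: "\<bar>t\<bar> * (\<Sum>j\<in>UNIV. \<bar>l x j - cost l x P\<bar>) < 1"
  shows "variance_tilt l x P t \<in> prob_simplex_interior"
proof -
  have "\<bar>t * (l x j - cost l x P)\<bar> < 1" for j
  proof -
    have "\<bar>l x j - cost l x P\<bar> \<le> (\<Sum>j\<in>UNIV. \<bar>l x j - cost l x P\<bar>)" by (rule member_le_sum) auto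
    then show ?thesis using t mult_left_mono[of _ _ "\<bar>t\<bar>"] by (simp add: abs_mult) (meson abs_ge_zero order_le_less_trans)
  qed
  then have pos: "variance_tilt l x P t $ j > 0" for j
    using P by (auto simp: variance_tilt_nth prob_simplex_interior_def abs_less_iff)
  have "(\<Sum>j\<in>UNIV. (variance_direction l x P)$j) = 0"
    using P sum_mult_centered_loss[of P l x]
    by (simp add: variance_direction_def prob_simplex_interior_def sum_negf)
  then have "(\<Sum>j\<in>UNIV. variance_tilt l x P t $ j) = 1"
    using P by (simp add: variance_tilt_def prob_simplex_interior_def sum.distrib flip: sum_distrib_left)
  then show ?thesis using pos unfolding prob_simplex_interior_def by blast
qed

lemma linearization_near_variance_tilt_le:
  fixes P q G :: "real^'d::finite"
  assumes lin: "norm (q - P) < \<delta> \<Longrightarrow> \<bar>f q - f P - G \<bullet> (q - P)\<bar> \<le> \<beta> * norm (q - P)"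
    and \<beta>: "\<beta> \<ge> 0" and G: "norm G \<le> B" and r: "r \<ge> 0" and \<tau>: "\<tau> \<ge> 0"
    and near: "\<forall>j. \<bar>q$j - variance_tilt l x P (\<tau> * r) $ j\<bar> < \<eta> * r"
    and small: "(real CARD('d) * \<eta> + \<tau> * norm (variance_direction l x P)) * r < \<delta>"
  shows "f q \<le> f P + r * (\<tau> * (G \<bullet> variance_direction l x P) + B * real CARD('d) * \<eta>
                 + (real CARD('d) * \<eta> + \<tau> * norm (variance_direction l x P)) * \<beta>)"
proof -
  define h where "h = variance_direction l x P"
  define Q where "Q = variance_tilt l x P (\<tau> * r)"
  define e where "e = real CARD('d) * (\<eta> * r)"
  have QP: "Q - P = (\<tau> * r) *\<^sub>R h" by (simp add: Q_def variance_tilt_def h_def)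
  have nqQ: "norm (q - Q) \<le> e"
    unfolding e_def using near by (intro norm_le_card_mult) (simp add: Q_def)
  have "norm (Q - P) = \<tau> * r * norm h" using \<tau> r by (simp add: QP)
  then have nqP: "norm (q - P) \<le> e + \<tau> * r * norm h"
    using norm_triangle_ineq[of "q - Q" "Q - P"] nqQ by simp
  have "G \<bullet> (q - Q) \<le> norm G * norm (q - Q)" by (rule norm_cauchy_schwarz)
  also have "\<dots> \<le> B * e"
    using G nqQ by (intro mult_mono) (auto intro: order_trans[OF norm_ge_zero])
  moreover have "G \<bullet> (q - P) = G \<bullet> (q - Q) + G \<bullet> (Q - P)"
    by (simp flip: inner_add_right)
  moreover have "G \<bullet> (Q - P) = \<tau> * r * (G \<bullet> h)" by (simp add: QP)
  moreover have "\<beta> * norm (q - P) \<le> \<beta> * (e + \<tau> * r * norm h)"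
    using nqP \<beta> by (rule mult_left_mono)
  moreover have "norm (q - P) < \<delta>"
    using nqP small by (simp add: e_def h_def algebra_simps)
  moreover have "r * (\<tau> * (G \<bullet> h) + B * real CARD('d) * \<eta> + (real CARD('d) * \<eta> + \<tau> * norm h) * \<beta>)
      = \<tau> * r * (G \<bullet> h) + B * e + \<beta> * (e + \<tau> * r * norm h)"
    by (simp add: e_def algebra_simps)
  ultimately show ?thesis
    using lin unfolding h_def[symmetric] abs_le_iff by linarith
qed

lemma iid_expect_near_variance_tilt_ge:
  fixes P :: "real^'d::finite"
  assumes P: "P \<in> prob_simplex_interior"
    and t: "0 \<le> t" "t * (\<Sum>j\<in>UNIV. \<bar>l x j - cost l x P\<bar>) \<le> 1/2"
    and T: "T \<ge> 1" and \<rho>: "\<rho> > 0" and T\<rho>: "2 * real CARD('d) \<le> real T * \<rho>\<^sup>2"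
  defines "Q \<equiv> variance_tilt l x P t"
  shows "iid_expect P T (\<lambda>u. of_bool (\<forall>j. \<bar>empirical_word T u $ j - Q$j\<bar> < \<rho>))
         \<ge> exp (- real T * (t\<^sup>2 * variance_loss l x P / 2
                             + 2 * t^3 * (\<Sum>j\<in>UNIV. P$j * \<bar>l x j - cost l x P\<bar>^3)
                             + 2 * \<rho> * t * (\<Sum>j\<in>UNIV. \<bar>l x j - cost l x P\<bar>))) / 2"
proof -
  define \<delta> where "\<delta> j = - t * (l x j - cost l x P)" for j
  have sP: "(\<Sum>j\<in>UNIV. P$j) = 1" using P by (simp add: prob_simplex_interior_def)
  have "\<bar>\<delta> j\<bar> \<le> 1/2" for j
  proof -
    have "\<bar>l x j - cost l x P\<bar> \<le> (\<Sum>j\<in>UNIV. \<bar>l x j - cost l x P\<bar>)" by (rule member_le_sum) auto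
    then have "t * \<bar>l x j - cost l x P\<bar> \<le> 1/2" using t by (meson mult_left_mono order_trans)
    then show ?thesis using t by (simp add: \<delta>_def abs_mult)
  qed
  moreover have "(\<Sum>j\<in>UNIV. P$j * \<delta> j) = 0"
    using sum_mult_centered_loss[OF sP, of l x]
    by (simp add: \<delta>_def mult.left_commute[of "P$_"] sum_negf flip: sum_distrib_left)
  ultimately have "iid_expect P T (\<lambda>u. of_bool (\<forall>j. \<bar>empirical_word T u $ j - P$j * (1 + \<delta> j)\<bar> < \<rho>))
         \<ge> exp (- real T * ((\<Sum>j\<in>UNIV. P$j * (\<delta> j)\<^sup>2) / 2 + 2 * (\<Sum>j\<in>UNIV. P$j * \<bar>\<delta> j\<bar>^3)
                             + 2 * \<rho> * (\<Sum>j\<in>UNIV. \<bar>\<delta> j\<bar>))) / 2"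
    by (rule iid_expect_near_perturb_ge[OF P _ _ T \<rho> T\<rho>])
  moreover have "(\<Sum>j\<in>UNIV. P$j * (\<delta> j)\<^sup>2) = t\<^sup>2 * variance_loss l x P"
    by (simp add: \<delta>_def variance_loss_def power_mult_distrib sum_distrib_left mult_ac)
  moreover have "(\<Sum>j\<in>UNIV. P$j * \<bar>\<delta> j\<bar>^3) = t^3 * (\<Sum>j\<in>UNIV. P$j * \<bar>l x j - cost l x P\<bar>^3)"
    using t by (simp add: \<delta>_def abs_mult power_mult_distrib sum_distrib_left mult_ac)
  moreover have "(\<Sum>j\<in>UNIV. \<bar>\<delta> j\<bar>) = t * (\<Sum>j\<in>UNIV. \<bar>l x j - cost l x P\<bar>)"
    using t by (simp add: \<delta>_def abs_mult sum_distrib_left)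
  moreover have "Q$j = P$j * (1 + \<delta> j)" for j
    by (simp add: Q_def \<delta>_def variance_tilt_nth)
  ultimately show ?thesis by (simp add: mult_ac)
qed

lemma iid_expect_near_variance_tilt_ge_exp:
  fixes P :: "real^'d::finite"
  assumes P: "P \<in> prob_simplex_interior" and T: "T \<ge> 1" and r: "r > 0"
    and \<tau>: "\<tau> \<ge> 0" and \<eta>: "\<eta> > 0"
    and small: "r * \<tau> * (\<Sum>j\<in>UNIV. \<bar>l x j - cost l x P\<bar>) \<le> 1/2"
    and large: "2 * real CARD('d) \<le> \<eta>\<^sup>2 * (real T * r\<^sup>2)"
    and K: "\<tau>\<^sup>2 * variance_loss l x P / 2 + 2 * r * \<tau>^3 * (\<Sum>j\<in>UNIV. P$j * \<bar>l x j - cost l x P\<bar>^3)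
            + 2 * \<eta> * \<tau> * (\<Sum>j\<in>UNIV. \<bar>l x j - cost l x P\<bar>) \<le> K"
  defines "Q \<equiv> variance_tilt l x P (\<tau> * r)"
  shows "exp (- (real T * r\<^sup>2) * K) / 2
         \<le> iid_expect P T (\<lambda>u. of_bool (\<forall>j. \<bar>empirical_word T u $ j - Q$j\<bar> < \<eta> * r))"
proof -
  define E where "E = \<tau>\<^sup>2 * variance_loss l x P / 2
     + 2 * r * \<tau>^3 * (\<Sum>j\<in>UNIV. P$j * \<bar>l x j - cost l x P\<bar>^3)
     + 2 * \<eta> * \<tau> * (\<Sum>j\<in>UNIV. \<bar>l x j - cost l x P\<bar>)"
  have "real T * ((\<tau> * r)\<^sup>2 * variance_loss l x P / 2
                   + 2 * (\<tau> * r)^3 * (\<Sum>j\<in>UNIV. P$j * \<bar>l x j - cost l x P\<bar>^3)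
                   + 2 * (\<eta> * r) * (\<tau> * r) * (\<Sum>j\<in>UNIV. \<bar>l x j - cost l x P\<bar>))
        = real T * r\<^sup>2 * E"
    by (simp add: E_def power2_eq_square power3_eq_cube algebra_simps)
  also have "\<dots> \<le> real T * r\<^sup>2 * K" unfolding E_def using K by (intro mult_left_mono) auto
  finally have "exp (- (real T * r\<^sup>2) * K) / 2
      \<le> exp (- real T * ((\<tau> * r)\<^sup>2 * variance_loss l x P / 2
                   + 2 * (\<tau> * r)^3 * (\<Sum>j\<in>UNIV. P$j * \<bar>l x j - cost l x P\<bar>^3)
                   + 2 * (\<eta> * r) * (\<tau> * r) * (\<Sum>j\<in>UNIV. \<bar>l x j - cost l x P\<bar>))) / 2"
    by simp
  also have "\<dots> \<le> iid_expect P T (\<lambda>u. of_bool (\<forall>j. \<bar>empirical_word T u $ j - Q$j\<bar> < \<eta> * r))"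
    unfolding Q_def using r \<tau> \<eta> small large
    by (intro iid_expect_near_variance_tilt_ge[OF P _ _ T])
      (simp_all add: power_mult_distrib mult_ac)
  finally show ?thesis .
qed

section \<open>Predictors with an out-of-sample guarantee\<close>

lemma equicont_on_pair_dist_lt:
  assumes "equicont_on (X \<times> S) (\<lambda>T (x, P). f x P T)" "x \<in> X" "P \<in> S" "e > 0"
  obtains \<delta> where "\<delta> > 0" "\<And>T Q. T \<ge> 1 \<Longrightarrow> Q \<in> S \<Longrightarrow> dist Q P < \<delta> \<Longrightarrow> dist (f x P T) (f x Q T) < e"
proof -
  obtain \<delta> where "\<delta> > 0" and \<delta>: "\<forall>T\<ge>1. \<forall>z\<in>X \<times> S. dist z (x, P) < \<delta> \<longrightarrow>
      dist ((\<lambda>(x, P). f x P T) (x, P)) ((\<lambda>(x, P). f x P T) z) < e"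
    using assms unfolding equicont_on_def by fastforce
  show ?thesis
    by (rule that[OF \<open>\<delta> > 0\<close>]) (use \<delta> assms(2) in \<open>force simp: dist_Pair_Pair\<close>)
qed

lemma exists_pos_eventually_at_right:
  "eventually P (at_right (0::real)) \<Longrightarrow> \<exists>t>0. P t"
  using eventually_happens'[OF trivial_limit_at_right_real eventually_conj[OF _ eventually_at_right_less]]
  by blast

lemma eventually_mult_less_at_right:
  "e > 0 \<Longrightarrow> eventually (\<lambda>t. c * t < e) (at_right (0::real))"
  using order_tendstoD(2)[OF tendsto_mult_right_zero[OF tendsto_ident_at], of e c "{0<..}"]
  by (simp add: at_right_eq)

lemma exists_tilt_scale:
  assumes V: "V \<ge> (0::real)" and s: "s < sqrt (2 * V)"
  shows "\<exists>\<tau>\<ge>0. s < \<tau> * V \<and> \<tau>\<^sup>2 * V < 2"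
proof (cases "V = 0")
  case True then show ?thesis using s by (intro exI[of _ 0]) simp
next
  case False
  then have V: "V > 0" using V by simp
  define s' where "s' = (max s 0 + sqrt (2 * V)) / 2"
  have s1: "s' > max s 0" and s2: "s' < sqrt (2 * V)" using s V by (auto simp: s'_def)
  have "s'\<^sup>2 < (sqrt (2 * V))\<^sup>2" using s1 s2 by (intro power_strict_mono) auto
  then have "(s' / V)\<^sup>2 * V < 2" using V by (simp add: power2_eq_square field_simps)
  moreover have "s < s' / V * V" using s1 V by simp
  ultimately show ?thesis using s1 V by (intro exI[of _ "s' / V"]) simp
qed

lemma scaled_chat_V_deviation:
  assumes a: "a T > 0" and T: "T \<ge> 1" and P: "\<And>j. P$j \<ge> 0"
  shows "sqrt (real T / a T) * \<bar>chat_V l a x P T - cost l x P\<bar> = sqrt (2 * variance_loss l x P)"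
proof -
  have "\<bar>chat_V l a x P T - cost l x P\<bar> = sqrt (2 * a T / real T * variance_loss l x P)"
    using a T variance_loss_nonneg[OF P, where l=l and x=x] by (simp add: chat_V_def)
  then have "sqrt (real T / a T) * \<bar>chat_V l a x P T - cost l x P\<bar>
      = sqrt (real T / a T) * sqrt (2 * a T / real T * variance_loss l x P)"
    by simp
  also have "\<dots> = sqrt (real T / a T * (2 * a T / real T * variance_loss l x P))"
    by (rule real_sqrt_mult[symmetric])
  also have "real T / a T * (2 * a T / real T * variance_loss l x P) = 2 * variance_loss l x P"
    using a T by (simp add: field_simps)
  finally show ?thesis .
qed

locale guaranteed_predictor =
  fixes X :: "(real^'n) set" and l :: "real^'n \<Rightarrow> 'd::finite \<Rightarrow> real"
    and chat :: "real^'n \<Rightarrow> real^'d \<Rightarrow> nat \<Rightarrow> real" and a :: "nat \<Rightarrow> real"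
    and g :: "real^'n \<Rightarrow> real^'d \<Rightarrow> nat \<Rightarrow> real^'d"
  assumes a_pos: "\<And>T. T \<ge> 1 \<Longrightarrow> a T > 0"
    and a_inf: "filterlim a at_top sequentially"
    and a_sublin: "(\<lambda>T. a T / real T) \<longlonglongrightarrow> 0"
    and chat_equicont: "equicont_on (X \<times> prob_simplex) (\<lambda>T (x,P). chat x P T)"
    and chat_gradient: "\<forall>T\<ge>1. \<forall>x\<in>X. \<forall>P\<in>prob_simplex.
          ((\<lambda>Q. chat x Q T) has_derivative (\<lambda>h. g x P T \<bullet> h)) (at P within prob_simplex)"
    and gradient_bounded: "unif_bounded_on (X \<times> prob_simplex) (\<lambda>T (x,P). g x P T)"
    and gradient_equicont: "equicont_on (X \<times> prob_simplex) (\<lambda>T (x,P). g x P T)"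
    and guarantee: "out_of_sample_guarantee X l chat a"
begin

definition rate :: "nat \<Rightarrow> real" where
  "rate T = sqrt (a T / real T)"

lemma rate_pos: "T \<ge> 1 \<Longrightarrow> rate T > 0"
  using a_pos[of T] by (simp add: rate_def)

lemma rate_tendsto_zero: "rate \<longlonglongrightarrow> 0"
  using tendsto_real_sqrt[OF a_sublin] unfolding rate_def[abs_def] by simp

lemma eventually_rate_mult_less: "e > 0 \<Longrightarrow> eventually (\<lambda>T. c * rate T < e) sequentially"
  using order_tendstoD(2)[OF tendsto_mult_right_zero[OF rate_tendsto_zero]] by simp

lemma guarantee_contradiction:
  assumes x: "x \<in> X" and P: "P \<in> prob_simplex_interior" and K: "K < 1"
    and often: "frequently (\<lambda>T. T \<ge> 1 \<and> exp (- a T * K) / 2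
               \<le> measure (law_inf P) {w \<in> space (law_inf P). cost l x P > chat x (empirical T w) T})
             sequentially"
  shows False
proof -
  define m where "m T = measure (law_inf P) {w \<in> space (law_inf P). cost l x P > chat x (empirical T w) T}" for T
  have "limsup (\<lambda>T. eln (m T) / ereal (a T)) \<le> -1"
    using guarantee x P unfolding out_of_sample_guarantee_def m_def by blast
  also have "\<dots> < ereal (- (1 + K) / 2)" using K by (simp add: one_ereal_def)
  finally have rate: "eventually (\<lambda>T. eln (m T) / ereal (a T) < ereal (- (1 + K) / 2)) sequentially"
    by (rule Limsup_lessD)
  have large: "eventually (\<lambda>T. 2 * ln 2 / (1 - K) \<le> a T) sequentially"
    using a_inf by (simp add: filterlim_at_top)
  have "frequently (\<lambda>T. (T \<ge> 1 \<and> exp (- a T * K) / 2 \<le> m T)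
      \<and> eln (m T) / ereal (a T) < ereal (- (1 + K) / 2) \<and> 2 * ln 2 / (1 - K) \<le> a T) sequentially"
    by (rule frequently_eventually_frequently[OF often[folded m_def] eventually_conj[OF rate large]])
  then obtain T where T: "T \<ge> 1" "exp (- a T * K) / 2 \<le> m T"
      "eln (m T) / ereal (a T) < ereal (- (1 + K) / 2)" "2 * ln 2 / (1 - K) \<le> a T"
    by (auto dest: frequently_ex)
  have aT: "a T > 0" using a_pos T(1) by simp
  have mT: "m T > 0" using T(2) exp_gt_zero[of "- a T * K"] by linarith
  have "- a T * K - ln 2 = ln (exp (- a T * K) / 2)" by (simp add: ln_div)
  also have "\<dots> \<le> ln (m T)" using T(2) mT by (subst ln_le_cancel_iff) auto
  finally have "a T * (- (1 + K) / 2) \<le> ln (m T)"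
    using T(4) K by (simp add: pos_divide_le_eq field_simps)
  then have "- (1 + K) / 2 \<le> ln (m T) / a T" using aT by (simp add: pos_le_divide_eq mult.commute)
  moreover have "ln (m T) / a T < - (1 + K) / 2" using T(3) mT aT by (simp add: eln_def)
  ultimately show False by linarith
qed

lemma eventually_cost_minus_le_chat:
  assumes x: "x \<in> X" and P: "P \<in> prob_simplex_interior" and \<gamma>: "\<gamma> > 0"
  shows "eventually (\<lambda>T. cost l x P - \<gamma> \<le> chat x P T) sequentially"
proof (rule ccontr)
  assume "\<not> ?thesis"
  then have often: "frequently (\<lambda>T. chat x P T < cost l x P - \<gamma>) sequentially"
    by (simp add: not_eventually not_le)
  have Ps: "P \<in> prob_simplex" using P prob_simplex_interior_subset by blast
  obtain \<delta> where \<delta>: "\<delta> > 0" and close: "\<And>T Q. T \<ge> 1 \<Longrightarrow> Q \<in> prob_simplex \<Longrightarrow> dist Q P < \<delta> \<Longrightarrow>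
      dist (chat x P T) (chat x Q T) < \<gamma>"
    using equicont_on_pair_dist_lt[OF chat_equicont x Ps \<gamma>] by blast
  define \<rho> where "\<rho> = \<delta> / (2 * real CARD('d))"
  have \<rho>: "\<rho> > 0" using \<delta> by (simp add: \<rho>_def)
  have "eventually (\<lambda>T. 1 \<le> T \<and> 2 * real CARD('d) / \<rho>\<^sup>2 \<le> real T) sequentially"
    using filterlim_real_sequentially
    by (intro eventually_conj eventually_ge_at_top) (simp add: filterlim_at_top)
  with often have "frequently (\<lambda>T. T \<ge> 1 \<and> exp (- a T * 0) / 2
      \<le> measure (law_inf P) {w \<in> space (law_inf P). cost l x P > chat x (empirical T w) T}) sequentially"
  proof (rule frequently_eventually_frequently[THEN frequently_elim1], safe)
    fix T assume below: "chat x P T < cost l x P - \<gamma>" and T: "1 \<le> T"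
      and large: "2 * real CARD('d) / \<rho>\<^sup>2 \<le> real T"
    have "exp (- a T * 0) / 2 \<le> 1 - real CARD('d) / (real T * \<rho>\<^sup>2)"
      using large T \<rho> by (simp add: field_simps)
    also have "\<dots> \<le> iid_expect P T (\<lambda>u. of_bool (\<forall>j. \<bar>empirical_word T u $ j - P$j\<bar> < \<rho>))"
      by (rule iid_expect_near_ge_Chebyshev[OF Ps \<rho> T])
    also have "\<dots> \<le> measure (law_inf P) {w \<in> space (law_inf P). cost l x P > chat x (empirical T w) T}"
    proof (rule iid_expect_near_le_measure_empirical[OF Ps T])
      fix q assume q: "q \<in> prob_simplex" "\<forall>j. \<bar>q$j - P$j\<bar> < \<rho>"
      have "norm (q - P) \<le> real CARD('d) * \<rho>" using q(2) by (intro norm_le_card_mult) simp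
      then have "dist q P < \<delta>" using \<delta> by (simp add: dist_norm \<rho>_def)
      then show "cost l x P > chat x q T"
        using close[OF T q(1)] below by (simp add: dist_real_def abs_less_iff)
    qed
    finally show "exp (- a T * 0) / 2
      \<le> measure (law_inf P) {w \<in> space (law_inf P). cost l x P > chat x (empirical T w) T}" .
  qed
  then show False by (rule guarantee_contradiction[OF x P zero_less_one])
qed

lemma chat_linearization:
  assumes x: "x \<in> X" and P: "P \<in> prob_simplex" and \<beta>: "\<beta> > 0"
  obtains \<delta> where "\<delta> > 0" and "\<And>T Q. T \<ge> 1 \<Longrightarrow> Q \<in> prob_simplex \<Longrightarrow> norm (Q - P) < \<delta> \<Longrightarrow>
           \<bar>chat x Q T - chat x P T - g x P T \<bullet> (Q - P)\<bar> \<le> \<beta> * norm (Q - P)"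
proof -
  obtain \<delta> where \<delta>: "\<delta> > 0" and close: "\<And>T Q. T \<ge> 1 \<Longrightarrow> Q \<in> prob_simplex \<Longrightarrow> dist Q P < \<delta> \<Longrightarrow>
      dist (g x P T) (g x Q T) < \<beta>"
    using equicont_on_pair_dist_lt[OF gradient_equicont x P \<beta>] by blast
  have "\<bar>chat x Q T - chat x P T - g x P T \<bullet> (Q - P)\<bar> \<le> \<beta> * norm (Q - P)"
    if T: "T \<ge> 1" and Q: "Q \<in> prob_simplex" and nQ: "norm (Q - P) < \<delta>" for T Q
  proof -
    define S where "S = prob_simplex \<inter> ball P \<delta>"
    have "norm (chat x Q T - chat x P T - g x P T \<bullet> (Q - P)) \<le> norm (Q - P) * \<beta>"
    proof (rule differentiable_bound_linearization[where S=S and f'="\<lambda>y h. g x y T \<bullet> h"])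
      fix t :: real assume t: "t \<in> {0..1}"
      have "P + t *\<^sub>R (Q - P) = (1 - t) *\<^sub>R P + t *\<^sub>R Q" by (simp add: algebra_simps)
      then have "P + t *\<^sub>R (Q - P) \<in> prob_simplex"
        using convexD[OF convex_prob_simplex P Q, of "1 - t" t] t by simp
      moreover have "dist P (P + t *\<^sub>R (Q - P)) < \<delta>"
        using t nQ mult_left_le_one_le[of "norm (Q - P)" t] by (simp add: dist_norm)
      ultimately show "P + t *\<^sub>R (Q - P) \<in> S" by (simp add: S_def)
    next
      fix y assume "y \<in> S"
      then show "((\<lambda>Q. chat x Q T) has_derivative (\<lambda>h. g x y T \<bullet> h)) (at y within S)"
        using chat_gradient T x by (auto intro: has_derivative_subset simp: S_def)
    next
      fix y assume y: "y \<in> S"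
      have "onorm ((\<lambda>h. g x y T \<bullet> h) - (\<lambda>h. g x P T \<bullet> h)) \<le> norm (g x y T - g x P T)"
        using onorm_inner_right[OF bounded_linear_ident, of "g x y T - g x P T"]
        by (simp add: fun_diff_def inner_diff_left onorm_id)
      also have "\<dots> < \<beta>"
        using close[OF T, of y] y by (simp add: S_def dist_commute dist_norm norm_minus_commute)
      finally show "onorm ((\<lambda>h. g x y T \<bullet> h) - (\<lambda>h. g x P T \<bullet> h)) \<le> \<beta>" by simp
    qed (use P \<delta> in \<open>simp add: S_def\<close>)
    then show ?thesis by (simp add: mult.commute)
  qed
  then show ?thesis using that \<delta> by blast
qed

text \<open>Consistency of \<open>chat\<close> at \<open>variance_tilt l x P (- \<epsilon>)\<close>, whose cost is
  \<open>c + \<epsilon> Var\<^sub>P\<close>, bounds the directional derivative of \<open>chat\<close> at \<open>P\<close> from above.\<close>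

lemma eventually_gradient_variance_direction_le:
  assumes x: "x \<in> X" and P: "P \<in> prob_simplex_interior" and \<theta>: "\<theta> > 0"
  shows "eventually (\<lambda>T. T \<ge> 1 \<and> chat x P T - cost l x P \<le> s * rate T
           \<longrightarrow> g x P T \<bullet> variance_direction l x P \<le> - variance_loss l x P + \<theta>) sequentially"
proof -
  define h where "h = variance_direction l x P"
  define c where "c = cost l x P"
  define V where "V = variance_loss l x P"
  have "\<exists>\<beta>>0. (1 + norm h) * \<beta> < \<theta> / 4"
    using \<theta> by (intro exists_pos_eventually_at_right eventually_mult_less_at_right) simp
  then obtain \<beta> where \<beta>: "\<beta> > 0" and \<beta>h: "(1 + norm h) * \<beta> < \<theta> / 4" by blast
  have Ps: "P \<in> prob_simplex" and sP: "(\<Sum>j\<in>UNIV. P$j) = 1"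
    using P prob_simplex_interior_subset by (auto simp: prob_simplex_interior_def)
  obtain \<delta> where \<delta>: "\<delta> > 0" and lin: "\<And>T Q. T \<ge> 1 \<Longrightarrow> Q \<in> prob_simplex \<Longrightarrow> norm (Q - P) < \<delta> \<Longrightarrow>
      \<bar>chat x Q T - chat x P T - g x P T \<bullet> (Q - P)\<bar> \<le> \<beta> * norm (Q - P)"
    using chat_linearization[OF x Ps \<beta>] by blast
  have "\<exists>\<epsilon>>0. (\<Sum>j\<in>UNIV. \<bar>l x j - c\<bar>) * \<epsilon> < 1 \<and> norm h * \<epsilon> < \<delta>"
    using \<delta> by (intro exists_pos_eventually_at_right eventually_conj eventually_mult_less_at_right) simp_all
  then obtain \<epsilon> where \<epsilon>: "\<epsilon> > 0" "(\<Sum>j\<in>UNIV. \<bar>l x j - c\<bar>) * \<epsilon> < 1" "norm h * \<epsilon> < \<delta>"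
    by blast
  define P' where "P' = variance_tilt l x P (- \<epsilon>)"
  have P': "P' \<in> prob_simplex_interior"
    using variance_tilt_in_interior[OF P, of "- \<epsilon>"] \<epsilon> by (simp add: P'_def c_def mult.commute)
  have "eventually (\<lambda>T. c + \<epsilon> * V - \<epsilon> * \<beta> \<le> chat x P' T) sequentially"
    using eventually_cost_minus_le_chat[OF x P', of "\<epsilon> * \<beta>"] \<epsilon> \<beta>
    by (simp add: P'_def cost_variance_tilt[OF sP] c_def V_def)
  moreover have "eventually (\<lambda>T. s * rate T < \<epsilon> * \<theta> / 2) sequentially"
    using \<epsilon> \<theta> by (intro eventually_rate_mult_less) simp
  ultimately show ?thesis unfolding h_def[symmetric] c_def[symmetric] V_def[symmetric]
  proof eventually_elim
    case (elim T)
    show ?case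
    proof
      assume bad: "T \<ge> 1 \<and> chat x P T - c \<le> s * rate T"
      have "norm (P' - P) = \<epsilon> * norm h" using \<epsilon> by (simp add: P'_def variance_tilt_def h_def)
      then have "chat x P' T \<le> chat x P T + g x P T \<bullet> (P' - P) + \<beta> * (\<epsilon> * norm h)"
        using lin[of T P'] bad P' \<epsilon> prob_simplex_interior_subset by (auto simp: abs_le_iff mult.commute)
      moreover have "g x P T \<bullet> (P' - P) = - (\<epsilon> * (g x P T \<bullet> h))"
        by (simp add: P'_def variance_tilt_def h_def)
      moreover have "\<epsilon> * \<beta> + \<beta> * (\<epsilon> * norm h) < \<epsilon> * \<theta> / 4"
        using mult_strict_left_mono[OF \<beta>h \<epsilon>(1)] by (simp add: algebra_simps)
      ultimately have "\<epsilon> * (g x P T \<bullet> h) < - (\<epsilon> * V) + \<epsilon> * \<theta>"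
        using elim bad[THEN conjunct2] mult_pos_pos[OF \<epsilon>(1) \<theta>] by linarith
      then have "\<epsilon> * (g x P T \<bullet> h) \<le> \<epsilon> * (- V + \<theta>)" by (simp add: algebra_simps)
      then show "g x P T \<bullet> h \<le> - V + \<theta>" using \<epsilon>(1) by (rule mult_left_le_imp_le)
    qed
  qed
qed

lemma gradient_bound:
  assumes "x \<in> X" "P \<in> prob_simplex"
  obtains B where "\<And>T. T \<ge> 1 \<Longrightarrow> norm (g x P T) \<le> B"
  using gradient_bounded assms unfolding unif_bounded_on_def by fastforce

lemma eventually_chat_near_variance_tilt_lt_cost:
  assumes x: "x \<in> X" and P: "P \<in> prob_simplex_interior" and \<tau>: "\<tau> \<ge> 0" and \<eta>: "\<eta> > 0"
    and B: "\<And>T. T \<ge> 1 \<Longrightarrow> norm (g x P T) \<le> B"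
    and budget: "B * real CARD('d) * \<eta> < (\<tau> * variance_loss l x P - s) / 4"
  shows "eventually (\<lambda>T. T \<ge> 1 \<and> chat x P T - cost l x P \<le> s * rate T \<longrightarrow>
           (\<forall>q\<in>prob_simplex. (\<forall>j. \<bar>q$j - variance_tilt l x P (\<tau> * rate T) $ j\<bar> < \<eta> * rate T)
              \<longrightarrow> chat x q T < cost l x P)) sequentially"
proof -
  define h where "h = variance_direction l x P"
  define V where "V = variance_loss l x P"
  define m where "m = \<tau> * V - s"
  define d where "d = real CARD('d)"
  have Ps: "P \<in> prob_simplex" using P prob_simplex_interior_subset by blast
  have "B \<ge> 0" using B[of 1] norm_ge_zero[of "g x P 1"] by linarith
  then have "B * real CARD('d) * \<eta> \<ge> 0" using \<eta> by simp
  then have m: "m > 0" using budget by (simp add: m_def V_def)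
  have "\<exists>\<beta>>0. (d * \<eta> + \<tau> * norm h) * \<beta> < m / 4 \<and> \<tau> * \<beta> < m / 4"
    using m by (intro exists_pos_eventually_at_right eventually_conj eventually_mult_less_at_right) simp_all
  then obtain \<beta> where \<beta>: "\<beta> > 0" "(d * \<eta> + \<tau> * norm h) * \<beta> < m / 4" "\<tau> * \<beta> < m / 4" by blast
  obtain \<delta> where \<delta>: "\<delta> > 0" and lin: "\<And>T Q. T \<ge> 1 \<Longrightarrow> Q \<in> prob_simplex \<Longrightarrow> norm (Q - P) < \<delta> \<Longrightarrow>
      \<bar>chat x Q T - chat x P T - g x P T \<bullet> (Q - P)\<bar> \<le> \<beta> * norm (Q - P)"
    using chat_linearization[OF x Ps \<beta>(1)] by blast
  have "eventually (\<lambda>T. T \<ge> 1 \<and> chat x P T - cost l x P \<le> s * rate T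
      \<longrightarrow> g x P T \<bullet> h \<le> - V + \<beta>) sequentially"
    unfolding h_def V_def by (rule eventually_gradient_variance_direction_le[OF x P \<beta>(1)])
  moreover have "eventually (\<lambda>T. (d * \<eta> + \<tau> * norm h) * rate T < \<delta>) sequentially"
    using \<delta> by (rule eventually_rate_mult_less)
  ultimately show ?thesis
  proof eventually_elim
    case (elim T)
    show ?case
    proof (intro impI ballI)
      fix q assume bad: "T \<ge> 1 \<and> chat x P T - cost l x P \<le> s * rate T" and q: "q \<in> prob_simplex"
        and near: "\<forall>j. \<bar>q$j - variance_tilt l x P (\<tau> * rate T) $ j\<bar> < \<eta> * rate T"
      have T: "T \<ge> 1" and r: "rate T > 0" using bad rate_pos by auto
      have "\<tau> * (g x P T \<bullet> h) \<le> \<tau> * (- V + \<beta>)"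
        using elim bad \<tau> by (intro mult_left_mono) auto
      moreover have "\<tau> * (- V + \<beta>) = - (\<tau> * V) + \<tau> * \<beta>" by (simp add: algebra_simps)
      ultimately have "\<tau> * (g x P T \<bullet> h) + B * d * \<eta> + (d * \<eta> + \<tau> * norm h) * \<beta> < - s"
        using budget \<beta> m m_def by (simp add: d_def V_def)
      then have "rate T * (\<tau> * (g x P T \<bullet> h) + B * d * \<eta> + (d * \<eta> + \<tau> * norm h) * \<beta>)
          < rate T * (- s)"
        using r by (rule mult_strict_left_mono)
      moreover have "chat x q T \<le> chat x P T
          + rate T * (\<tau> * (g x P T \<bullet> h) + B * d * \<eta> + (d * \<eta> + \<tau> * norm h) * \<beta>)"
        using linearization_near_variance_tilt_le[where f="\<lambda>Q. chat x Q T",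
              OF lin[OF T q] less_imp_le[OF \<beta>(1)] B[OF T] less_imp_le[OF r] \<tau> near] elim
        by (simp add: h_def d_def)
      ultimately show "chat x q T < cost l x P"
        using bad by (simp add: algebra_simps)
    qed
  qed
qed

lemma eventually_iid_expect_near_variance_tilt_ge:
  assumes P: "P \<in> prob_simplex_interior" and \<tau>: "\<tau> \<ge> 0" and \<eta>: "\<eta> > 0"
    and K: "\<tau>\<^sup>2 * variance_loss l x P / 2 + 2 * \<eta> * \<tau> * (\<Sum>j\<in>UNIV. \<bar>l x j - cost l x P\<bar>) < K"
  shows "eventually (\<lambda>T. exp (- a T * K) / 2 \<le> iid_expect P T (\<lambda>u. of_bool
           (\<forall>j. \<bar>empirical_word T u $ j - variance_tilt l x P (\<tau> * rate T) $ j\<bar> < \<eta> * rate T)))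
         sequentially"
proof -
  define M1 where "M1 = (\<Sum>j\<in>UNIV. \<bar>l x j - cost l x P\<bar>)"
  define M3 where "M3 = (\<Sum>j\<in>UNIV. P$j * \<bar>l x j - cost l x P\<bar>^3)"
  have "eventually (\<lambda>T. T \<ge> 1 \<and> (\<tau> * M1) * rate T < 1/2
      \<and> (2 * \<tau>^3 * M3) * rate T < K - (\<tau>\<^sup>2 * variance_loss l x P / 2 + 2 * \<eta> * \<tau> * M1)
      \<and> 2 * real CARD('d) / \<eta>\<^sup>2 \<le> a T) sequentially"
    using a_inf K by (intro eventually_conj eventually_ge_at_top eventually_rate_mult_less)
      (simp_all add: filterlim_at_top M1_def)
  then show ?thesis
  proof eventually_elim
    case (elim T)
    then have T: "T \<ge> 1" by simp
    have "real T * (rate T)\<^sup>2 = a T" using a_pos[OF T] T by (simp add: rate_def)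
    moreover have "2 * real CARD('d) \<le> \<eta>\<^sup>2 * a T" using elim \<eta> by (simp add: field_simps)
    moreover have "rate T * \<tau> * M1 \<le> 1/2" using elim by (simp add: mult_ac)
    moreover have "\<tau>\<^sup>2 * variance_loss l x P / 2 + 2 * rate T * \<tau>^3 * M3 + 2 * \<eta> * \<tau> * M1 \<le> K"
      using elim by (simp add: mult_ac)
    ultimately show ?case
      using iid_expect_near_variance_tilt_ge_exp[OF P T rate_pos[OF T] \<tau> \<eta>, where l=l and x=x and K=K]
      by (simp add: M1_def M3_def)
  qed
qed

lemma sqrt_div_mult_rate: "T \<ge> 1 \<Longrightarrow> sqrt (real T / a T) * rate T = 1"
  using a_pos[of T] by (simp add: rate_def real_sqrt_mult[symmetric])

lemma not_frequently_chat_le_cost_plus_rate: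
  assumes x: "x \<in> X" and P: "P \<in> prob_simplex_interior" and s: "s < sqrt (2 * variance_loss l x P)"
  shows "\<not> frequently (\<lambda>T. T \<ge> 1 \<and> chat x P T - cost l x P \<le> s * rate T) sequentially"
proof
  assume often: "frequently (\<lambda>T. T \<ge> 1 \<and> chat x P T - cost l x P \<le> s * rate T) sequentially"
  define M1 where "M1 = (\<Sum>j\<in>UNIV. \<bar>l x j - cost l x P\<bar>)"
  have Ps: "P \<in> prob_simplex" using P prob_simplex_interior_subset by blast
  then have "variance_loss l x P \<ge> 0" by (intro variance_loss_nonneg) (simp add: prob_simplex_def)
  then obtain \<tau> where \<tau>: "\<tau> \<ge> 0" "s < \<tau> * variance_loss l x P" "\<tau>\<^sup>2 * variance_loss l x P < 2"
    using exists_tilt_scale s by blast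
  define K where "K = (1 + \<tau>\<^sup>2 * variance_loss l x P / 2) / 2"
  have K: "K < 1" "\<tau>\<^sup>2 * variance_loss l x P / 2 < K" using \<tau>(3) by (simp_all add: K_def)
  obtain B where B: "\<And>T. T \<ge> 1 \<Longrightarrow> norm (g x P T) \<le> B"
    using gradient_bound[OF x Ps] by blast
  have "\<exists>\<eta>>0. (B * real CARD('d)) * \<eta> < (\<tau> * variance_loss l x P - s) / 4
                \<and> (2 * \<tau> * M1) * \<eta> < K - \<tau>\<^sup>2 * variance_loss l x P / 2"
    using \<tau> K by (intro exists_pos_eventually_at_right eventually_conj eventually_mult_less_at_right) simp_all
  then obtain \<eta> where \<eta>: "\<eta> > 0" "(B * real CARD('d)) * \<eta> < (\<tau> * variance_loss l x P - s) / 4"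
    "(2 * \<tau> * M1) * \<eta> < K - \<tau>\<^sup>2 * variance_loss l x P / 2" by blast
  have "eventually (\<lambda>T. exp (- a T * K) / 2 \<le> iid_expect P T (\<lambda>u. of_bool
           (\<forall>j. \<bar>empirical_word T u $ j - variance_tilt l x P (\<tau> * rate T) $ j\<bar> < \<eta> * rate T)))
         sequentially"
    using \<eta>(3) by (intro eventually_iid_expect_near_variance_tilt_ge[OF P \<tau>(1) \<eta>(1)])
      (simp add: M1_def mult_ac)
  moreover have "eventually (\<lambda>T. T \<ge> 1 \<and> chat x P T - cost l x P \<le> s * rate T \<longrightarrow>
           (\<forall>q\<in>prob_simplex. (\<forall>j. \<bar>q$j - variance_tilt l x P (\<tau> * rate T) $ j\<bar> < \<eta> * rate T)
              \<longrightarrow> chat x q T < cost l x P)) sequentially"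
    by (rule eventually_chat_near_variance_tilt_lt_cost[OF x P \<tau>(1) \<eta>(1) B \<eta>(2)])
  ultimately have "eventually (\<lambda>T. T \<ge> 1 \<and> chat x P T - cost l x P \<le> s * rate T \<longrightarrow> T \<ge> 1 \<and>
      exp (- a T * K) / 2 \<le> measure (law_inf P) {w \<in> space (law_inf P). cost l x P > chat x (empirical T w) T})
      sequentially"
  proof eventually_elim
    case (elim T)
    show ?case
    proof
      assume bad: "T \<ge> 1 \<and> chat x P T - cost l x P \<le> s * rate T"
      then have "iid_expect P T (\<lambda>u. of_bool
           (\<forall>j. \<bar>empirical_word T u $ j - variance_tilt l x P (\<tau> * rate T) $ j\<bar> < \<eta> * rate T))
          \<le> measure (law_inf P) {w \<in> space (law_inf P). cost l x P > chat x (empirical T w) T}"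
        using elim(2) by (intro iid_expect_near_le_measure_empirical[OF Ps]) auto
      then show "T \<ge> 1 \<and> exp (- a T * K) / 2
          \<le> measure (law_inf P) {w \<in> space (law_inf P). cost l x P > chat x (empirical T w) T}"
        using elim(1) bad by linarith
    qed
  qed
  then have "frequently (\<lambda>T. T \<ge> 1 \<and> exp (- a T * K) / 2
      \<le> measure (law_inf P) {w \<in> space (law_inf P). cost l x P > chat x (empirical T w) T}) sequentially"
    using often by (rule frequently_mp)
  then show False by (rule guarantee_contradiction[OF x P K(1)])
qed

lemma limsup_scaled_chat_V:
  assumes P: "P \<in> prob_simplex_interior"
  shows "limsup (\<lambda>T. ereal (sqrt (real T / a T) * \<bar>chat_V l a x P T - cost l x P\<bar>))
         = ereal (sqrt (2 * variance_loss l x P))"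
proof (intro lim_imp_Limsup tendsto_eventually)
  show "eventually (\<lambda>T. ereal (sqrt (real T / a T) * \<bar>chat_V l a x P T - cost l x P\<bar>)
      = ereal (sqrt (2 * variance_loss l x P))) sequentially"
    using eventually_ge_at_top[of 1]
    by eventually_elim
      (use P in \<open>simp add: scaled_chat_V_deviation a_pos prob_simplex_interior_def less_imp_le\<close>)
qed simp

lemma sqrt_two_variance_le_liminf:
  assumes x: "x \<in> X" and P: "P \<in> prob_simplex_interior"
  shows "ereal (sqrt (2 * variance_loss l x P))
         \<le> liminf (\<lambda>T. ereal (sqrt (real T / a T) * (chat x P T - cost l x P)))"
  unfolding le_Liminf_iff
proof (intro allI impI)
  fix y assume "y < ereal (sqrt (2 * variance_loss l x P))"
  then obtain z where z: "y < ereal z" "z < sqrt (2 * variance_loss l x P)"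
    using ereal_dense2 by (metis less_ereal.simps(1) order.strict_trans)
  have "eventually (\<lambda>T. \<not> (T \<ge> 1 \<and> chat x P T - cost l x P \<le> z * rate T)) sequentially"
    using not_frequently_chat_le_cost_plus_rate[OF x P z(2)] by (simp add: not_frequently)
  then show "eventually (\<lambda>T. y < ereal (sqrt (real T / a T) * (chat x P T - cost l x P))) sequentially"
    using eventually_ge_at_top[of 1]
  proof eventually_elim
    case (elim T)
    then have "sqrt (real T / a T) * (z * rate T) < sqrt (real T / a T) * (chat x P T - cost l x P)"
      using a_pos[of T] by (intro mult_strict_left_mono) auto
    moreover have "sqrt (real T / a T) * (z * rate T) = z"
      using sqrt_div_mult_rate[OF elim(2)] by (metis mult.left_commute mult.right_neutral)
    ultimately have "z < sqrt (real T / a T) * (chat x P T - cost l x P)" by simp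
    then show ?case using z(1) by (simp add: order_less_trans)
  qed
qed

end

theorem mainTheorem7:
  fixes X :: "(real^'n) set"
    and l :: "real^'n \<Rightarrow> 'd::finite \<Rightarrow> real"
    and chat :: "real^'n \<Rightarrow> real^'d \<Rightarrow> nat \<Rightarrow> real"
    and a :: "nat \<Rightarrow> real"
  assumes d2: "CARD('d) \<ge> 2"
    and X_compact: "compact X"
    and l_cont: "\<And>i. continuous_on X (\<lambda>x. l x i)"
    and a_pos: "\<And>T. T \<ge> 1 \<Longrightarrow> a T > 0"
    and a_inf: "filterlim a at_top sequentially"
    and a_sublin: "(\<lambda>T. a T / real T) \<longlonglongrightarrow> 0"
    and regular: "regular_predictor X chat"
    and guarantee: "out_of_sample_guarantee X l chat a"
  shows "\<forall>x\<in>X. \<forall>P\<in>prob_simplex_interior.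
           limsup (\<lambda>T. ereal (sqrt (real T / a T) * \<bar>chat_V l a x P T - cost l x P\<bar>))
             \<le> liminf (\<lambda>T. ereal (sqrt (real T / a T) * (chat x P T - cost l x P))) \<and>
           limsup (\<lambda>T. ereal (sqrt (real T / a T) * \<bar>chat_V l a x P T - cost l x P\<bar>))
             = ereal (sqrt (2 * variance_loss l x P))"
proof -
  obtain g where "guaranteed_predictor X l chat a g"
    using regular a_pos a_inf a_sublin guarantee
    unfolding regular_predictor_def guaranteed_predictor_def by blast
  then interpret guaranteed_predictor X l chat a g .
  show ?thesis
    by (auto simp: limsup_scaled_chat_V intro: sqrt_two_variance_le_liminf)
qed

end
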